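(* Let $N>1$ and $s,r\in\mathbb{N}$. The number of pairs $(a,b)\in\{1,\dots,N\}^2$ such that \[ \frac{b\,(s\,t^2+r\,t)}{s\,a^2+r\,a}\notin\mathbb{Z}\quad\text{for all integers }1\le t<a \] equals \[ \sum_{a=1}^{N}\ \sum_{J\subseteq\{1,\dots,a-1\}}(-1)^{|J|}\left\lfloor\frac{N}{\operatorname{lcm}(m_{a,t}:t\in J)}\right\rfloor, \qquad m_{a,t}=\frac{a(sa+r)}{\gcd\bigl(a(sa+r),\,t(st+r)\bigr)}. \]
   Context: $\mathbb{N}$ denotes the positive integers; $\operatorname{lcm}$ over the empty set is $1$. *)

theory Defs
  imports Complex_Main
begin

definition mval :: "nat \<Rightarrow> nat \<Rightarrow> nat \<Rightarrow> nat \<Rightarrow> nat" where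
  "mval s r a t = (a * (s * a + r)) div gcd (a * (s * a + r)) (t * (s * t + r))"

end

theory Submission
  imports Defs
begin

text \<open>Since m_{a,t} is a(sa+r) divided by its gcd with t(st+r), the fraction
  b t(st+r) / (a(sa+r)) is an integer exactly when m_{a,t} divides b.  So for each
  fixed a we count the b in {1..N} divisible by none of the m_{a,t}, t < a; by
  inclusion-exclusion this is an alternating sum of the numbers of common multiples
  of subfamilies, and the common multiples of m_{a,t} (t \<in> J) in {1..N} are the
  multiples of their lcm, of which there are N div lcm.\<close>

lemma sum_Pow_insert:
  assumes "finite A" "x \<notin> A"
  shows "(\<Sum>X\<in>Pow (insert x A). f X) = (\<Sum>X\<in>Pow A. f X) + (\<Sum>X\<in>Pow A. f (insert x X))"
proof -
  have "inj_on (insert x) (Pow A)"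
    using assms(2) by (auto intro!: inj_onI)
  then show ?thesis
    unfolding Pow_insert using assms
    by (subst sum.union_disjoint) (auto simp: sum.reindex)
qed

lemma int_card_sieve:
  assumes "finite U" "finite S"
  shows "int (card {x\<in>U. \<forall>t\<in>S. \<not> P t x})
       = (\<Sum>J\<in>Pow S. (-1) ^ card J * int (card {x\<in>U. \<forall>t\<in>J. P t x}))"
  using assms(2,1)
proof (induction S arbitrary: U rule: finite_induct)
  case empty
  then show ?case by simp
next
  case (insert y S)
  let ?V = "{x\<in>U. P y x}"
  let ?avoid = "\<lambda>W. {x\<in>W. \<forall>t\<in>S. \<not> P t x}"
  let ?hit = "\<lambda>W J. {x\<in>W. \<forall>t\<in>J. P t x}"
  have split: "{x\<in>U. \<forall>t\<in>insert y S. \<not> P t x} = ?avoid U - ?avoid ?V"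
    and sub: "?avoid ?V \<subseteq> ?avoid U"
    by auto
  have fin: "finite (?avoid U)" and finV: "finite ?V"
    using insert.prems by simp_all
  have "int (card {x\<in>U. \<forall>t\<in>insert y S. \<not> P t x})
      = int (card (?avoid U)) - int (card (?avoid ?V))"
    unfolding split card_Diff_subset[OF finite_subset[OF sub fin] sub]
    by (rule of_nat_diff[OF card_mono[OF fin sub]])
  also have "\<dots> = (\<Sum>J\<in>Pow S. (-1) ^ card J * int (card (?hit U J)))
      - (\<Sum>J\<in>Pow S. (-1) ^ card J * int (card (?hit ?V J)))"
    by (simp only: insert.IH[OF insert.prems] insert.IH[OF finV])
  also have "\<dots> = (\<Sum>J\<in>Pow (insert y S). (-1) ^ card J * int (card (?hit U J)))"
  proof -
    have "(-1) ^ card (insert y J) * int (card (?hit U (insert y J)))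
        = - ((-1) ^ card J * int (card (?hit ?V J)))" if "J \<in> Pow S" for J
    proof -
      have "finite J" "y \<notin> J"
        using that insert.hyps finite_subset by auto
      moreover have "?hit U (insert y J) = ?hit ?V J"
        by auto
      ultimately show ?thesis
        by simp
    qed
    then show ?thesis
      using insert.hyps by (simp add: sum_Pow_insert sum_negf)
  qed
  finally show ?case .
qed

lemma card_multiples_atLeastAtMost: "card {b\<in>{1..N}. (c::nat) dvd b} = N div c"
proof (cases "c = 0")
  case False
  then have "{b\<in>{1..N}. c dvd b} = (*) c ` {1..N div c}"
    by (auto simp: less_eq_div_iff_mult_less_eq mult.commute Suc_le_eq)
  moreover have "inj_on ((*) c) {1..N div c}"
    using False by (auto intro: inj_onI)
  ultimately show ?thesis
    by (simp add: card_image)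
qed simp

lemma int_card_no_multiple:
  fixes m :: "'a \<Rightarrow> nat"
  assumes "finite S"
  shows "int (card {b\<in>{1..N}. \<forall>t\<in>S. \<not> m t dvd b})
       = (\<Sum>J\<in>Pow S. (-1) ^ card J * int (N div Lcm (m ` J)))"
proof -
  have "{b\<in>{1..N}. \<forall>t\<in>J. m t dvd b} = {b\<in>{1..N}. Lcm (m ` J) dvd b}" for J
    by (auto simp: Lcm_dvd_iff)
  then have "card {b\<in>{1..N}. \<forall>t\<in>J. m t dvd b} = N div Lcm (m ` J)" for J
    by (simp only: card_multiples_atLeastAtMost)
  then show ?thesis
    using int_card_sieve[OF _ assms, of "{1..N}" "\<lambda>t b. m t dvd b"] by simp
qed

lemma of_nat_div_of_nat_in_Ints_iff:
  "(of_nat x / of_nat y :: 'a :: {division_ring, ring_char_0}) \<in> \<int> \<longleftrightarrow> y = 0 \<or> y dvd x"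
  using of_int_div_of_int_in_Ints_iff[of "int x" "int y", where 'a = 'a] by simp

lemma div_gcd_dvd_iff:
  fixes a c b :: nat
  assumes "a > 0"
  shows "a div gcd a c dvd b \<longleftrightarrow> a dvd b * c"
  using assms by (simp add: div_dvd_iff_mult gcd_mult_distrib_nat mult.commute)

lemma fraction_in_Ints_iff_mval_dvd:
  assumes "a > 0" "s * a + r > 0"
  shows "(of_nat (b * (s * t^2 + r * t)) / of_nat (s * a^2 + r * a)
            :: 'a :: {division_ring, ring_char_0}) \<in> \<int>
       \<longleftrightarrow> mval s r a t dvd b"
proof -
  have factor: "s * a^2 + r * a = a * (s * a + r)" "s * t^2 + r * t = t * (s * t + r)"
    by (simp_all add: power2_eq_square algebra_simps)
  have pos: "a * (s * a + r) > 0"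
    using assms by simp
  show ?thesis
    unfolding factor of_nat_div_of_nat_in_Ints_iff mval_def div_gcd_dvd_iff[OF pos]
    using pos by auto
qed

theorem theorem3p8:
  fixes N s r :: nat
  assumes "N > 1" and "s \<ge> 1" and "r \<ge> 1"
  shows "int (card {(a, b) \<in> {1..N} \<times> {1..N}.
            \<forall>t::nat. 1 \<le> t \<and> t < a \<longrightarrow>
              (of_nat (b * (s * t^2 + r * t)) / of_nat (s * a^2 + r * a) :: rat) \<notin> \<int>})
       = (\<Sum>a = 1..N. \<Sum>J \<in> Pow {1..<a}.
            (-1) ^ card J * int (N div Lcm (mval s r a ` J)))"
proof -
  let ?B = "\<lambda>a. {b\<in>{1..N}. \<forall>t\<in>{1..<a}. \<not> mval s r a t dvd b}"
  have "(of_nat (b * (s * t^2 + r * t)) / of_nat (s * a^2 + r * a) :: rat) \<in> \<int>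
      \<longleftrightarrow> mval s r a t dvd b" if "a \<ge> 1" for a b t
    using that assms(3) by (intro fraction_in_Ints_iff_mval_dvd) auto
  then have pairs_eq: "{(a, b) \<in> {1..N} \<times> {1..N}.
            \<forall>t::nat. 1 \<le> t \<and> t < a \<longrightarrow>
              (of_nat (b * (s * t^2 + r * t)) / of_nat (s * a^2 + r * a) :: rat) \<notin> \<int>}
        = Sigma {1..N} ?B"
    by auto
  have "int (card (Sigma {1..N} ?B)) = (\<Sum>a = 1..N. int (card (?B a)))"
    by (simp add: card_SigmaI)
  also have "\<dots> = (\<Sum>a = 1..N. \<Sum>J \<in> Pow {1..<a}.
            (-1) ^ card J * int (N div Lcm (mval s r a ` J)))"
    by (intro sum.cong refl int_card_no_multiple) simp
  finally show ?thesis
    unfolding pairs_eq .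
qed

end
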